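(* Let $(R,L,[-,-],\rho,\rhd)$ be a post-Lie-Rinehart algebra over a field $k$ of characteristic $0$. Then the algebra of elementary $R$-module endomorphisms $\mathrm{El}_R(L)$ is the $R$-subalgebra of $(\mathrm{End}_R(L),\circ)$ generated by $\{dX,\ \delta X : X\in L\}$.
   Context: A Lie-Rinehart algebra $(R,L,\llbracket-,-\rrbracket,\rho)$: $R$ a commutative $k$-algebra, $L$ a $k$-Lie algebra that is an $R$-module, $\rho\colon L\to\mathrm{Der}_k(R)$ an $R$-linear Lie algebra morphism (write $X.f=\rho(X)(f)$), with $\llbracket X,fY\rrbracket=(X.f)Y+f\llbracket X,Y\rrbracket$. A post-Lie-Rinehart algebra is such a Lie-Rinehart algebra together with a connection $\rhd$ ($k$-bilinear, $R$-linear in the first argument, $X\rhd(fY)=(X.f)Y+fX\rhd Y$) that is flat ($\llbracket X,Y\rrbracket\rhd Z=X\rhd(Y\rhd Z)-Y\rhd(X\rhd Z)$) and whose torsion $T(X,Y)=X\rhd Y-Y\rhd X-\llbracket X,Y\rrbracket$ is parallel ($X\rhd T(Y,Z)=T(X\rhd Y,Z)+T(Y,X\rhd Z)$); the bracket $[X,Y]=-T(X,Y)$ is the associated $R$-bilinear post-Lie bracket. For $X\in L$ define $dX,\delta X\in\mathrm{End}_R(L)$ by $dX(Z)=Z\rhd X$ and $\delta X(Z)=T(Z,X)$. For $\nu\in\mathrm{End}_R(L)$ and $X\in L$ let $(\hat\nabla_X\nu)(Y)=X\rhd(\nu(Y))-\nu(X\rhd Y)$. $\mathrm{El}_R(L)$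 is the $R$-subalgebra of $(\mathrm{End}_R(L),\circ)$ generated by all $\hat\nabla_{X_1}\hat\nabla_{X_2}\cdots\hat\nabla_{X_m}dY$ and $\hat\nabla_{X_1}\cdots\hat\nabla_{X_m}\delta Y$ with $m\ge0$ and $X_1,\dots,X_m,Y\in L$. *)

theory Defs
  imports Main
begin

text \<open>
  A post-Lie-Rinehart algebra over a field k of characteristic 0.
  k is the type 'k (class field_char_0), R is the type 'r (a commutative ring)
  made into a k-algebra via the structure map iota :: 'k => 'r,
  L is the additive group 'l with R-action sm (scalar multiplication),
  br is the Lie bracket, rho the anchor (X.f = rho X f), cn the connection (X |> Y = cn X Y).
  The k-linear structure on L and R is the one induced through iota.
\<close>

definition k_algebra :: "('k::field_char_0 \<Rightarrow> 'r::comm_ring_1) \<Rightarrow> bool" where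
  "k_algebra iota \<longleftrightarrow>
     iota 1 = 1 \<and> (\<forall>a b. iota (a + b) = iota a + iota b) \<and> (\<forall>a b. iota (a * b) = iota a * iota b)"

definition r_module :: "('r::comm_ring_1 \<Rightarrow> 'l::ab_group_add \<Rightarrow> 'l) \<Rightarrow> bool" where
  "r_module sm \<longleftrightarrow>
     (\<forall>X. sm 1 X = X) \<and> (\<forall>f g X. sm (f * g) X = sm f (sm g X)) \<and>
     (\<forall>f g X. sm (f + g) X = sm f X + sm g X) \<and> (\<forall>f X Y. sm f (X + Y) = sm f X + sm f Y)"

definition k_bilinear :: "('k::field_char_0 \<Rightarrow> 'r::comm_ring_1) \<Rightarrow> ('r \<Rightarrow> 'l::ab_group_add \<Rightarrow> 'l)
    \<Rightarrow> ('l \<Rightarrow> 'l \<Rightarrow> 'l) \<Rightarrow> bool" where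
  "k_bilinear iota sm b \<longleftrightarrow>
     (\<forall>X Y Z. b (X + Y) Z = b X Z + b Y Z) \<and> (\<forall>X Y Z. b X (Y + Z) = b X Y + b X Z) \<and>
     (\<forall>c X Y. b (sm (iota c) X) Y = sm (iota c) (b X Y)) \<and>
     (\<forall>c X Y. b X (sm (iota c) Y) = sm (iota c) (b X Y))"

definition lie_algebra :: "('k::field_char_0 \<Rightarrow> 'r::comm_ring_1) \<Rightarrow> ('r \<Rightarrow> 'l::ab_group_add \<Rightarrow> 'l)
    \<Rightarrow> ('l \<Rightarrow> 'l \<Rightarrow> 'l) \<Rightarrow> bool" where
  "lie_algebra iota sm br \<longleftrightarrow>
     k_bilinear iota sm br \<and> (\<forall>X. br X X = 0) \<and>
     (\<forall>X Y Z. br X (br Y Z) + br Y (br Z X) + br Z (br X Y) = 0)"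

definition k_derivation :: "('k::field_char_0 \<Rightarrow> 'r::comm_ring_1) \<Rightarrow> ('r \<Rightarrow> 'r) \<Rightarrow> bool" where
  "k_derivation iota D \<longleftrightarrow>
     (\<forall>f g. D (f + g) = D f + D g) \<and> (\<forall>c f. D (iota c * f) = iota c * D f) \<and>
     (\<forall>f g. D (f * g) = D f * g + f * D g)"

definition lie_rinehart ::
  "('k::field_char_0 \<Rightarrow> 'r::comm_ring_1) \<Rightarrow> ('r \<Rightarrow> 'l::ab_group_add \<Rightarrow> 'l)
    \<Rightarrow> ('l \<Rightarrow> 'l \<Rightarrow> 'l) \<Rightarrow> ('l \<Rightarrow> 'r \<Rightarrow> 'r) \<Rightarrow> bool" where
  "lie_rinehart iota sm br rho \<longleftrightarrow>
     k_algebra iota \<and> r_module sm \<and> lie_algebra iota sm br \<and>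
     (\<forall>X. k_derivation iota (rho X)) \<and>
     (\<forall>X Y. rho (X + Y) = (\<lambda>f. rho X f + rho Y f)) \<and>
     (\<forall>f X. rho (sm f X) = (\<lambda>g. f * rho X g)) \<and>
     (\<forall>X Y. rho (br X Y) = (\<lambda>f. rho X (rho Y f) - rho Y (rho X f))) \<and>
     (\<forall>X Y f. br X (sm f Y) = sm (rho X f) Y + sm f (br X Y))"

definition torsion :: "('l::ab_group_add \<Rightarrow> 'l \<Rightarrow> 'l) \<Rightarrow> ('l \<Rightarrow> 'l \<Rightarrow> 'l) \<Rightarrow> 'l \<Rightarrow> 'l \<Rightarrow> 'l" where
  "torsion br cn X Y = cn X Y - cn Y X - br X Y"

definition post_lie_rinehart ::
  "('k::field_char_0 \<Rightarrow> 'r::comm_ring_1) \<Rightarrow> ('r \<Rightarrow> 'l::ab_group_add \<Rightarrow> 'l)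
    \<Rightarrow> ('l \<Rightarrow> 'l \<Rightarrow> 'l) \<Rightarrow> ('l \<Rightarrow> 'r \<Rightarrow> 'r) \<Rightarrow> ('l \<Rightarrow> 'l \<Rightarrow> 'l) \<Rightarrow> bool" where
  "post_lie_rinehart iota sm br rho cn \<longleftrightarrow>
     lie_rinehart iota sm br rho \<and>
     \<comment> \<open>connection: k-bilinear, R-linear in the first argument, Leibniz in the second\<close>
     k_bilinear iota sm cn \<and>
     (\<forall>f X Y. cn (sm f X) Y = sm f (cn X Y)) \<and>
     (\<forall>f X Y. cn X (sm f Y) = sm (rho X f) Y + sm f (cn X Y)) \<and>
     \<comment> \<open>flat\<close>
     (\<forall>X Y Z. cn (br X Y) Z = cn X (cn Y Z) - cn Y (cn X Z)) \<and>
     \<comment> \<open>parallel torsion\<close>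
     (\<forall>X Y Z. cn X (torsion br cn Y Z) =
                torsion br cn (cn X Y) Z + torsion br cn Y (cn X Z))"

definition dop :: "('l \<Rightarrow> 'l \<Rightarrow> 'l) \<Rightarrow> 'l \<Rightarrow> 'l \<Rightarrow> 'l" where
  "dop cn X = (\<lambda>Z. cn Z X)"

definition deltaop :: "('l::ab_group_add \<Rightarrow> 'l \<Rightarrow> 'l) \<Rightarrow> ('l \<Rightarrow> 'l \<Rightarrow> 'l) \<Rightarrow> 'l \<Rightarrow> 'l \<Rightarrow> 'l" where
  "deltaop br cn X = (\<lambda>Z. torsion br cn Z X)"

definition nabla_hat :: "('l::ab_group_add \<Rightarrow> 'l \<Rightarrow> 'l) \<Rightarrow> 'l \<Rightarrow> ('l \<Rightarrow> 'l) \<Rightarrow> 'l \<Rightarrow> 'l" where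
  "nabla_hat cn X nu = (\<lambda>Y. cn X (nu Y) - nu (cn X Y))"

definition nabla_iter :: "('l::ab_group_add \<Rightarrow> 'l \<Rightarrow> 'l) \<Rightarrow> 'l list \<Rightarrow> ('l \<Rightarrow> 'l) \<Rightarrow> 'l \<Rightarrow> 'l" where
  "nabla_iter cn Xs nu = foldr (nabla_hat cn) Xs nu"

inductive_set r_subalg_gen :: "('r \<Rightarrow> 'l::ab_group_add \<Rightarrow> 'l) \<Rightarrow> ('l \<Rightarrow> 'l) set \<Rightarrow> ('l \<Rightarrow> 'l) set"
  for sm :: "'r \<Rightarrow> 'l \<Rightarrow> 'l" and S :: "('l \<Rightarrow> 'l) set" where
  gen: "\<phi> \<in> S \<Longrightarrow> \<phi> \<in> r_subalg_gen sm S"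
| unit: "id \<in> r_subalg_gen sm S"
| add: "\<phi> \<in> r_subalg_gen sm S \<Longrightarrow> \<psi> \<in> r_subalg_gen sm S \<Longrightarrow> (\<lambda>Z. \<phi> Z + \<psi> Z) \<in> r_subalg_gen sm S"
| comp: "\<phi> \<in> r_subalg_gen sm S \<Longrightarrow> \<psi> \<in> r_subalg_gen sm S \<Longrightarrow> \<phi> \<circ> \<psi> \<in> r_subalg_gen sm S"
| smul: "\<phi> \<in> r_subalg_gen sm S \<Longrightarrow> (\<lambda>Z. sm f (\<phi> Z)) \<in> r_subalg_gen sm S"

definition El :: "('r \<Rightarrow> 'l::ab_group_add \<Rightarrow> 'l) \<Rightarrow> ('l \<Rightarrow> 'l \<Rightarrow> 'l) \<Rightarrow> ('l \<Rightarrow> 'l \<Rightarrow> 'l) \<Rightarrow> ('l \<Rightarrow> 'l) set" where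
  "El sm br cn = r_subalg_gen sm
     ({nabla_iter cn Xs (dop cn Y) | Xs Y. True} \<union> {nabla_iter cn Xs (deltaop br cn Y) | Xs Y. True})"

end

theory Submission
  imports Defs HOL.Modules
begin

text \<open>
  Each \<open>\<nabla>\<^sub>X\<close> is a derivation of the composition algebra of additive endomorphisms that
  also satisfies a Leibniz rule for \<open>R\<close>-scalars and kills the identity. Hence the subalgebra
  generated by all \<open>dY\<close> and \<open>\<delta>Y\<close> is \<open>\<nabla>\<^sub>X\<close>-stable as soon as \<open>\<nabla>\<^sub>X\<close> maps these generators
  into it. For \<open>\<delta>Y\<close> this is parallelism of the torsion, \<open>\<nabla>\<^sub>X(\<delta>Y) = \<delta>(X \<rhd> Y)\<close>; for \<open>dY\<close>
  flatness gives \<open>\<nabla>\<^sub>X(dY) = d(X \<rhd> Y) - dY \<circ> dX + dY \<circ> \<delta>X\<close>. So all iterated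
  \<open>\<nabla>\<close>-derivatives of generators stay in that subalgebra, and conversely they include the
  generators themselves (\<open>m = 0\<close>).
\<close>

lemma r_subalg_gen_minimal:
  assumes "S \<subseteq> r_subalg_gen sm T"
  shows "r_subalg_gen sm S \<subseteq> r_subalg_gen sm T"
proof
  fix \<phi> assume "\<phi> \<in> r_subalg_gen sm S"
  then show "\<phi> \<in> r_subalg_gen sm T"
    by induct (use assms in \<open>blast intro: r_subalg_gen.intros\<close>)+
qed

lemma r_module_imp_module: "r_module sm \<Longrightarrow> module sm"
  unfolding r_module_def by unfold_locales auto

context module
begin

lemma r_subalg_gen_zero: "(\<lambda>Z. 0) \<in> r_subalg_gen scale S"
proof -
  have "(\<lambda>Z. 0 *s id Z) \<in> r_subalg_gen scale S"
    by (intro r_subalg_gen.smul r_subalg_gen.unit)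
  then show ?thesis by simp
qed

lemma r_subalg_gen_diff:
  assumes "\<phi> \<in> r_subalg_gen scale S" "\<psi> \<in> r_subalg_gen scale S"
  shows "(\<lambda>Z. \<phi> Z - \<psi> Z) \<in> r_subalg_gen scale S"
  using r_subalg_gen.add[OF assms(1) r_subalg_gen.smul[OF assms(2), where f = "-1"]] by simp

lemma r_subalg_gen_additive:
  assumes "\<And>\<phi>. \<phi> \<in> S \<Longrightarrow> additive \<phi>"
    and "\<phi> \<in> r_subalg_gen scale S"
  shows "additive \<phi>"
  using assms(2)
  by induct (auto simp: additive_def scale_right_distrib dest: assms(1)[unfolded additive_def])

lemma r_subalg_gen_derivation_closed:
  assumes gen_additive: "\<And>\<phi>. \<phi> \<in> S \<Longrightarrow> additive \<phi>"
    and D_gen: "\<And>\<phi>. \<phi> \<in> S \<Longrightarrow> D \<phi> \<in> r_subalg_gen scale S"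
    and D_id: "D id = (\<lambda>Z. 0)"
    and D_add: "\<And>\<phi> \<psi>. D (\<lambda>Z. \<phi> Z + \<psi> Z) = (\<lambda>Z. D \<phi> Z + D \<psi> Z)"
    and D_comp: "\<And>\<phi> \<psi>. additive \<phi> \<Longrightarrow> D (\<phi> \<circ> \<psi>) = (\<lambda>Z. (D \<phi> \<circ> \<psi>) Z + (\<phi> \<circ> D \<psi>) Z)"
    and D_smul: "\<And>f \<phi>. D (\<lambda>Z. f *s \<phi> Z) = (\<lambda>Z. \<rho> f *s \<phi> Z + f *s D \<phi> Z)"
    and "\<phi> \<in> r_subalg_gen scale S"
  shows "D \<phi> \<in> r_subalg_gen scale S"
  using \<open>\<phi> \<in> r_subalg_gen scale S\<close>
proof induct
  case (gen \<phi>)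
  then show ?case by (rule D_gen)
next
  case unit
  show ?case unfolding D_id by (rule r_subalg_gen_zero)
next
  case (add \<phi> \<psi>)
  then show ?case by (simp add: D_add r_subalg_gen.add)
next
  case (comp \<phi> \<psi>)
  have "additive \<phi>"
    using gen_additive comp(1) by (rule r_subalg_gen_additive)
  then show ?case
    unfolding D_comp[OF \<open>additive \<phi>\<close>]
    by (intro r_subalg_gen.add r_subalg_gen.comp comp)
next
  case (smul \<phi> f)
  then show ?case
    unfolding D_smul by (intro r_subalg_gen.add r_subalg_gen.smul)
qed

end

locale post_lie_rinehart_algebra =
  fixes iota :: "'k::field_char_0 \<Rightarrow> 'r::comm_ring_1"
    and sm :: "'r \<Rightarrow> 'l::ab_group_add \<Rightarrow> 'l"
    and br :: "'l \<Rightarrow> 'l \<Rightarrow> 'l"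
    and rho :: "'l \<Rightarrow> 'r \<Rightarrow> 'r"
    and cn :: "'l \<Rightarrow> 'l \<Rightarrow> 'l"
  assumes post_lie_rinehart: "post_lie_rinehart iota sm br rho cn"
begin

sublocale module sm
  using post_lie_rinehart
  by (intro r_module_imp_module) (simp add: post_lie_rinehart_def lie_rinehart_def)

lemma cn_add_left: "cn (X + Y) Z = cn X Z + cn Y Z"
  and cn_add_right: "cn X (Y + Z) = cn X Y + cn X Z"
  and cn_leibniz: "cn X (sm f Y) = sm (rho X f) Y + sm f (cn X Y)"
  and cn_flat: "cn (br X Y) Z = cn X (cn Y Z) - cn Y (cn X Z)"
  and torsion_parallel: "cn X (torsion br cn Y Z) = torsion br cn (cn X Y) Z + torsion br cn Y (cn X Z)"
  using post_lie_rinehart by (simp_all add: post_lie_rinehart_def k_bilinear_def)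

lemma br_add_left: "br (X + Y) Z = br X Z + br Y Z"
  and br_add_right: "br X (Y + Z) = br X Y + br X Z"
  and br_self: "br X X = 0"
  using post_lie_rinehart
  by (simp_all add: post_lie_rinehart_def lie_rinehart_def lie_algebra_def k_bilinear_def)

lemma br_anticomm: "br Y X = - br X Y"
proof -
  have "0 = br (X + Y) (X + Y)" by (simp add: br_self)
  also have "\<dots> = br X Y + br Y X"
    unfolding br_add_left br_add_right by (simp add: br_self)
  finally have "br X Y + br Y X = 0" by (rule sym)
  then show ?thesis by (metis minus_unique)
qed

lemma additive_cn_left: "additive (\<lambda>X. cn X Z)"
  by unfold_locales (rule cn_add_left)

lemma cn_minus_left: "cn (- X) Z = - cn X Z"
  and cn_diff_left: "cn (X - Y) Z = cn X Z - cn Y Z"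
  by (simp_all add: additive.minus[OF additive_cn_left] additive.diff[OF additive_cn_left])

lemma additive_dop: "additive (dop cn Y)"
  unfolding dop_def by (rule additive_cn_left)

lemma additive_deltaop: "additive (deltaop br cn Y)"
  by unfold_locales (simp add: deltaop_def torsion_def cn_add_left cn_add_right br_add_left)

lemma nabla_hat_deltaop: "nabla_hat cn X (deltaop br cn Y) = deltaop br cn (cn X Y)"
  by (simp add: nabla_hat_def deltaop_def torsion_parallel)

lemma nabla_hat_dop:
  "nabla_hat cn X (dop cn Y) =
     (\<lambda>Z. dop cn (cn X Y) Z - (dop cn Y \<circ> dop cn X) Z + (dop cn Y \<circ> deltaop br cn X) Z)"
proof
  fix Z
  have "cn X (cn Z Y) = cn (br X Z) Y + cn Z (cn X Y)"
    by (simp add: cn_flat)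
  moreover have "cn (torsion br cn Z X) Y = cn (cn Z X) Y - cn (cn X Z) Y + cn (br X Z) Y"
    by (simp add: torsion_def br_anticomm[of X Z] cn_diff_left cn_add_left cn_minus_left)
  ultimately show "nabla_hat cn X (dop cn Y) Z =
      dop cn (cn X Y) Z - (dop cn Y \<circ> dop cn X) Z + (dop cn Y \<circ> deltaop br cn X) Z"
    by (simp add: nabla_hat_def dop_def deltaop_def)
qed

lemma nabla_hat_id: "nabla_hat cn X id = (\<lambda>Z. 0)"
  by (simp add: nabla_hat_def)

lemma nabla_hat_add: "nabla_hat cn X (\<lambda>Z. \<phi> Z + \<psi> Z) = (\<lambda>Z. nabla_hat cn X \<phi> Z + nabla_hat cn X \<psi> Z)"
  by (simp add: nabla_hat_def cn_add_right fun_eq_iff)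

lemma nabla_hat_comp:
  assumes "additive \<phi>"
  shows "nabla_hat cn X (\<phi> \<circ> \<psi>) = (\<lambda>Z. (nabla_hat cn X \<phi> \<circ> \<psi>) Z + (\<phi> \<circ> nabla_hat cn X \<psi>) Z)"
  by (simp add: nabla_hat_def fun_eq_iff additive.diff[OF assms])

lemma nabla_hat_smul:
  "nabla_hat cn X (\<lambda>Z. sm f (\<phi> Z)) = (\<lambda>Z. sm (rho X f) (\<phi> Z) + sm f (nabla_hat cn X \<phi> Z))"
  by (simp add: nabla_hat_def fun_eq_iff cn_leibniz scale_right_diff_distrib)

lemma nabla_iter_Nil: "nabla_iter cn [] \<phi> = \<phi>"
  and nabla_iter_Cons: "nabla_iter cn (X # Xs) \<phi> = nabla_hat cn X (nabla_iter cn Xs \<phi>)"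
  by (simp_all add: nabla_iter_def)

abbreviation d_delta_alg :: "('l \<Rightarrow> 'l) set" where
  "d_delta_alg \<equiv> r_subalg_gen sm ({dop cn X | X. True} \<union> {deltaop br cn X | X. True})"

lemma dop_in_d_delta_alg: "dop cn Y \<in> d_delta_alg"
  and deltaop_in_d_delta_alg: "deltaop br cn Y \<in> d_delta_alg"
  by (auto intro: r_subalg_gen.gen)

lemma nabla_hat_d_delta_gen:
  assumes "\<phi> \<in> {dop cn X | X. True} \<union> {deltaop br cn X | X. True}"
  shows "additive \<phi> \<and> nabla_hat cn X \<phi> \<in> d_delta_alg"
proof -
  from assms consider Y where "\<phi> = dop cn Y" | Y where "\<phi> = deltaop br cn Y"
    by blast
  then show ?thesis
  proof cases
    case (1 Y)
    show ?thesis
      unfolding 1 nabla_hat_dop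
      by (intro conjI additive_dop r_subalg_gen.add r_subalg_gen_diff r_subalg_gen.comp
          dop_in_d_delta_alg deltaop_in_d_delta_alg)
  next
    case (2 Y)
    show ?thesis
      unfolding 2 nabla_hat_deltaop by (intro conjI additive_deltaop deltaop_in_d_delta_alg)
  qed
qed

lemma nabla_hat_d_delta_alg: "\<phi> \<in> d_delta_alg \<Longrightarrow> nabla_hat cn X \<phi> \<in> d_delta_alg"
  using nabla_hat_d_delta_gen[THEN conjunct1] nabla_hat_d_delta_gen[THEN conjunct2]
    nabla_hat_id nabla_hat_add nabla_hat_comp nabla_hat_smul
  by (rule r_subalg_gen_derivation_closed)

lemma nabla_iter_d_delta_alg:
  assumes "\<phi> \<in> d_delta_alg"
  shows "nabla_iter cn Xs \<phi> \<in> d_delta_alg"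
proof (induct Xs)
  case Nil
  show ?case using assms by (simp only: nabla_iter_Nil)
next
  case (Cons X Xs)
  then show ?case unfolding nabla_iter_Cons by (rule nabla_hat_d_delta_alg)
qed

end

theorem proposition4p4:
  fixes iota :: "'k::field_char_0 \<Rightarrow> 'r::comm_ring_1"
    and sm :: "'r \<Rightarrow> 'l::ab_group_add \<Rightarrow> 'l"
    and br :: "'l \<Rightarrow> 'l \<Rightarrow> 'l"
    and rho :: "'l \<Rightarrow> 'r \<Rightarrow> 'r"
    and cn :: "'l \<Rightarrow> 'l \<Rightarrow> 'l"
  assumes "post_lie_rinehart iota sm br rho cn"
  shows "El sm br cn = r_subalg_gen sm ({dop cn X | X. True} \<union> {deltaop br cn X | X. True})"
proof
  interpret post_lie_rinehart_algebra iota sm br rho cn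
    using assms by unfold_locales
  show "El sm br cn \<subseteq> d_delta_alg"
    unfolding El_def
    by (rule r_subalg_gen_minimal)
      (blast intro: nabla_iter_d_delta_alg dop_in_d_delta_alg deltaop_in_d_delta_alg)
  show "d_delta_alg \<subseteq> El sm br cn"
    unfolding El_def
  proof (intro r_subalg_gen_minimal subsetI r_subalg_gen.gen)
    fix \<phi> assume "\<phi> \<in> {dop cn X | X. True} \<union> {deltaop br cn X | X. True}"
    then obtain Y where "\<phi> = nabla_iter cn [] (dop cn Y) \<or> \<phi> = nabla_iter cn [] (deltaop br cn Y)"
      by (auto simp: nabla_iter_Nil)
    then show "\<phi> \<in> {nabla_iter cn Xs (dop cn Y) | Xs Y. True} \<union>
        {nabla_iter cn Xs (deltaop br cn Y) | Xs Y. True}"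
      by blast
  qed
qed

end
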